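(* Consider the $d$-level Nested Logit model and the experiment design $\mathcal{S}$ described in the context, and suppose the $d$-level general position assumption (described in the context) holds. Let $S \in \mathcal{S}$ and $i,j \in S$. Then: (I) if $j$ is a child of $N^{\mathrm{par}}(i)$, then $\mathsf{BF}(i,S) = \mathsf{BF}(j,S)$; (II) if $j$ is not a child of $N^{\mathrm{par}}(i)$ and there exists a child $k$ of $N^{\mathrm{par}}(i)$ with $k \notin S$, then $\mathsf{BF}(i,S) \neq \mathsf{BF}(j,S)$.
   Context: Items: $[n]=\{1,\dots,n\}$, $n \ge 2$. Experiment design: fix an integer base $b \ge 2$, let $L = \lceil \log_b n \rceil$, fix an injective map $\sigma: [n] \to \{0,\dots,b-1\}^L$ with coordinates $\sigma_\ell(i)$, let $S_{\ell,-d} = \{i \in [n] : \sigma_\ell(i) \neq d\}$ for $\ell \in \{1,\dots,L\}$, $d \in \{0,\dots,b-1\}$, and $\mathcal{S} = \{S_{\ell,-d}\}_{\ell,d}$; the control assortment $[n]$ is also offered. $d$-level Nested Logit model: the items are the leaves of a rooted tree $\mathcal{T}$ of depth $d \ge 1$ in which every leaf is at depth $d$; internal nodes are called nests. For each item $i$, $r = a_0(i) \to a_1(i) \to \cdots \to a_d(i) = i$ is the root-to-leaf path, and $N^{\mathrm{par}}(i) = a_{d-1}(i)$ is the parent of $i$. For a node $N$, $\mathrm{Ch}(N)$ is its set of children and $\mathrm{Leaf}(N)$ the set of leaves in its subtree; for an assortment $S$ we write $N \cap S$ for $\mathrm{Leaf}(N) \cap S$. Each item has a weight $v_i > 0$ and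 each internal node $N$ a parameter $\lambda_N \in (0,1]$. For $S \subseteq [n]$: $v_i(S) = v_i$ if $i \in S$ and $0$ otherwise; for internal $N$, $v_N(S) = (\sum_{K \in \mathrm{Ch}(N)} v_K(S))^{\lambda_N}$; for $K \in \mathrm{Ch}(N)$, $P(K \mid N, S) = v_K(S)/\sum_{L' \in \mathrm{Ch}(N)} v_{L'}(S)$; and $\phi(i,S) = \prod_{h=0}^{d-1} P(a_{h+1}(i) \mid a_h(i), S)$ for $i \in S$. For a node $N$, $P(N \mid S) = \sum_{i \in \mathrm{Leaf}(N) \cap S} \phi(i,S)$. Boost factor: $\mathsf{BF}(i,S) = \phi(i,S)/\phi(i,[n])$. $d$-level general position assumption: for every $S \in \mathcal{S}$ and any two distinct internal nodes $N \neq N'$ with $N \cap S \neq \emptyset$ and $N' \cap S \neq \emptyset$, and such that $N \cap S \subsetneq \mathrm{Leaf}(N)$ or $N' \cap S \subsetneq \mathrm{Leaf}(N')$, we have $\frac{P(N \mid S)}{P(N \mid [n])} \cdot \frac{\sum_{K \in \mathrm{Ch}(N)} v_K([n])}{\sum_{K \in \mathrm{Ch}(N)} v_K(S)} \neq \frac{P(N' \mid S)}{P(N' \mid [n])} \cdot \frac{\sum_{K \in \mathrm{Ch}(N')} v_K([n])}{\sum_{K \in \mathrm{Ch}(N')} v_K(S)}$. *)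

theory Defs
  imports Complex_Main
begin

text \<open>The tree of depth d is encoded by an ancestor map:
  anc h i is the label of a_h(i), the depth-h ancestor of item i (0 <= h <= d);
  a node of the tree is a pair (h, x) with x = anc h i for some item i.
  The root is the unique depth-0 node, and a_d(i) = i (leaves are the items).\<close>

definition nl_tree :: "nat \<Rightarrow> nat \<Rightarrow> (nat \<Rightarrow> nat \<Rightarrow> nat) \<Rightarrow> bool" where
  "nl_tree n d anc \<longleftrightarrow>
     1 \<le> d \<and>
     (\<forall>i\<in>{1..n}. \<forall>j\<in>{1..n}. anc 0 i = anc 0 j) \<and>
     (\<forall>i\<in>{1..n}. anc d i = i) \<and>
     (\<forall>h<d. \<forall>i\<in>{1..n}. \<forall>j\<in>{1..n}. anc (Suc h) i = anc (Suc h) j \<longrightarrow> anc h i = anc h j)"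

definition nl_leaves :: "nat \<Rightarrow> (nat \<Rightarrow> nat \<Rightarrow> nat) \<Rightarrow> nat \<Rightarrow> nat \<Rightarrow> nat set" where
  "nl_leaves n anc h x = {i \<in> {1..n}. anc h i = x}"

definition nl_children :: "nat \<Rightarrow> (nat \<Rightarrow> nat \<Rightarrow> nat) \<Rightarrow> nat \<Rightarrow> nat \<Rightarrow> nat set" where
  "nl_children n anc h x = anc (Suc h) ` nl_leaves n anc h x"

text \<open>Node values v_N(S), computed bottom-up; the argument k is d minus the depth.\<close>
primrec nl_vup :: "nat \<Rightarrow> nat \<Rightarrow> (nat \<Rightarrow> nat \<Rightarrow> nat) \<Rightarrow> (nat \<Rightarrow> real) \<Rightarrow> (nat \<Rightarrow> nat \<Rightarrow> real)
    \<Rightarrow> nat set \<Rightarrow> nat \<Rightarrow> nat \<Rightarrow> real" where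
  "nl_vup n d anc v lam S 0 x = (\<Sum>i\<in>nl_leaves n anc d x \<inter> S. v i)"
| "nl_vup n d anc v lam S (Suc k) x =
     (\<Sum>K\<in>nl_children n anc (d - Suc k) x. nl_vup n d anc v lam S k K) powr lam (d - Suc k) x"

definition nl_v :: "nat \<Rightarrow> nat \<Rightarrow> (nat \<Rightarrow> nat \<Rightarrow> nat) \<Rightarrow> (nat \<Rightarrow> real) \<Rightarrow> (nat \<Rightarrow> nat \<Rightarrow> real)
    \<Rightarrow> nat set \<Rightarrow> nat \<Rightarrow> nat \<Rightarrow> real" where
  "nl_v n d anc v lam S h x = nl_vup n d anc v lam S (d - h) x"

definition nl_csum :: "nat \<Rightarrow> nat \<Rightarrow> (nat \<Rightarrow> nat \<Rightarrow> nat) \<Rightarrow> (nat \<Rightarrow> real) \<Rightarrow> (nat \<Rightarrow> nat \<Rightarrow> real)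
    \<Rightarrow> nat set \<Rightarrow> nat \<Rightarrow> nat \<Rightarrow> real" where
  "nl_csum n d anc v lam S h x = (\<Sum>K\<in>nl_children n anc h x. nl_v n d anc v lam S (Suc h) K)"

definition nl_phi :: "nat \<Rightarrow> nat \<Rightarrow> (nat \<Rightarrow> nat \<Rightarrow> nat) \<Rightarrow> (nat \<Rightarrow> real) \<Rightarrow> (nat \<Rightarrow> nat \<Rightarrow> real)
    \<Rightarrow> nat \<Rightarrow> nat set \<Rightarrow> real" where
  "nl_phi n d anc v lam i S =
     (\<Prod>h<d. nl_v n d anc v lam S (Suc h) (anc (Suc h) i) / nl_csum n d anc v lam S h (anc h i))"

definition nl_PN :: "nat \<Rightarrow> nat \<Rightarrow> (nat \<Rightarrow> nat \<Rightarrow> nat) \<Rightarrow> (nat \<Rightarrow> real) \<Rightarrow> (nat \<Rightarrow> nat \<Rightarrow> real)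
    \<Rightarrow> nat set \<Rightarrow> nat \<Rightarrow> nat \<Rightarrow> real" where
  "nl_PN n d anc v lam S h x = (\<Sum>i\<in>nl_leaves n anc h x \<inter> S. nl_phi n d anc v lam i S)"

definition nl_BF :: "nat \<Rightarrow> nat \<Rightarrow> (nat \<Rightarrow> nat \<Rightarrow> nat) \<Rightarrow> (nat \<Rightarrow> real) \<Rightarrow> (nat \<Rightarrow> nat \<Rightarrow> real)
    \<Rightarrow> nat \<Rightarrow> nat set \<Rightarrow> real" where
  "nl_BF n d anc v lam i S = nl_phi n d anc v lam i S / nl_phi n d anc v lam i {1..n}"

text \<open>sigma i is the base-b word of item i (a list of length L); coordinate
  sigma_l(i) = sigma i ! (l - 1) for l in 1..L.\<close>
definition nl_design :: "nat \<Rightarrow> nat \<Rightarrow> nat \<Rightarrow> (nat \<Rightarrow> nat list) \<Rightarrow> nat set set" where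
  "nl_design n b L \<sigma> =
     {{i \<in> {1..n}. \<sigma> i ! (l - 1) \<noteq> dd} | l dd. l \<in> {1..L} \<and> dd < b}"

definition nl_ratio :: "nat \<Rightarrow> nat \<Rightarrow> (nat \<Rightarrow> nat \<Rightarrow> nat) \<Rightarrow> (nat \<Rightarrow> real) \<Rightarrow> (nat \<Rightarrow> nat \<Rightarrow> real)
    \<Rightarrow> nat set \<Rightarrow> nat \<Rightarrow> nat \<Rightarrow> real" where
  "nl_ratio n d anc v lam S h x =
     nl_PN n d anc v lam S h x / nl_PN n d anc v lam {1..n} h x *
     (nl_csum n d anc v lam {1..n} h x / nl_csum n d anc v lam S h x)"

definition nl_general_position :: "nat \<Rightarrow> nat \<Rightarrow> (nat \<Rightarrow> nat \<Rightarrow> nat) \<Rightarrow> (nat \<Rightarrow> real)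
    \<Rightarrow> (nat \<Rightarrow> nat \<Rightarrow> real) \<Rightarrow> nat set set \<Rightarrow> bool" where
  "nl_general_position n d anc v lam \<S> \<longleftrightarrow>
     (\<forall>S\<in>\<S>. \<forall>h x h' x'.
        h < d \<longrightarrow> h' < d \<longrightarrow> x \<in> anc h ` {1..n} \<longrightarrow> x' \<in> anc h' ` {1..n} \<longrightarrow>
        (h, x) \<noteq> (h', x') \<longrightarrow>
        nl_leaves n anc h x \<inter> S \<noteq> {} \<longrightarrow> nl_leaves n anc h' x' \<inter> S \<noteq> {} \<longrightarrow>
        (nl_leaves n anc h x \<inter> S \<subset> nl_leaves n anc h x \<or>
         nl_leaves n anc h' x' \<inter> S \<subset> nl_leaves n anc h' x') \<longrightarrow>
        nl_ratio n d anc v lam S h x \<noteq> nl_ratio n d anc v lam S h' x')"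

end

theory Submission
  imports Defs
begin

text \<open>All leaves below a bottom-level nest N share the path from the root to N, so
  phi(i,S) = P(N | S) * v_i / (sum of v_k over k in N \<inter> S) with N the parent of i.
  Dividing by the same identity for [n], BF(i,S) is exactly the general position ratio
  of the parent nest of i. Part (I) follows because siblings have the same parent, and
  part (II) is the general position assumption for the two distinct parent nests, the
  one of i being only partially offered.\<close>

lemma nl_tree_anc_eq_below:
  assumes tree: "nl_tree n (Suc d) anc" and m: "m \<in> {1..n}" and l: "l \<in> {1..n}"
    and eq: "anc d m = anc d l" and h: "h \<le> d"
  shows "anc h m = anc h l"
  using h
proof (induction h rule: inc_induct)
  case base
  show ?case using eq .
next
  case (step h)
  then show ?case using tree m l unfolding nl_tree_def by (meson less_SucI)
qed

lemma nl_tree_anc_leaf: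
  assumes "nl_tree n d anc" and "i \<in> {1..n}"
  shows "anc d i = i"
  using assms unfolding nl_tree_def by blast

lemma nl_leaves_leaf:
  assumes tree: "nl_tree n d anc" and y: "y \<in> {1..n}"
  shows "nl_leaves n anc d y = {y}"
  using nl_tree_anc_leaf[OF tree] y unfolding nl_leaves_def by auto

lemma nl_v_leaf:
  assumes tree: "nl_tree n d anc" and y: "y \<in> {1..n}"
  shows "nl_v n d anc v lam T d y = (if y \<in> T then v y else 0)"
  using nl_leaves_leaf[OF tree y] unfolding nl_v_def by auto

lemma nl_children_bottom:
  assumes tree: "nl_tree n (Suc d) anc"
  shows "nl_children n anc d x = nl_leaves n anc d x"
  using nl_tree_anc_leaf[OF tree] unfolding nl_children_def nl_leaves_def
  by (simp add: image_cong)

lemma nl_csum_bottom: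
  assumes tree: "nl_tree n (Suc d) anc"
  shows "nl_csum n (Suc d) anc v lam T d x = (\<Sum>k\<in>nl_leaves n anc d x \<inter> T. v k)"
proof -
  have "nl_csum n (Suc d) anc v lam T d x
      = (\<Sum>k\<in>nl_leaves n anc d x. if k \<in> T then v k else 0)"
    unfolding nl_csum_def nl_children_bottom[OF tree]
    by (intro sum.cong refl nl_v_leaf[OF tree]) (simp add: nl_leaves_def)
  also have "\<dots> = (\<Sum>k\<in>nl_leaves n anc d x \<inter> T. v k)"
    by (simp add: sum.inter_restrict nl_leaves_def)
  finally show ?thesis .
qed

lemma nl_csum_bottom_pos:
  assumes tree: "nl_tree n (Suc d) anc" and vpos: "\<forall>k\<in>{1..n}. v k > 0"
    and l: "l \<in> {1..n}" and lT: "l \<in> T"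
  shows "nl_csum n (Suc d) anc v lam T d (anc d l) > 0"
  unfolding nl_csum_bottom[OF tree]
proof (rule sum_pos2)
  show "l \<in> nl_leaves n anc d (anc d l) \<inter> T" using l lT by (simp add: nl_leaves_def)
qed (use vpos l in \<open>auto simp: nl_leaves_def less_imp_le\<close>)

text \<open>The probability of reaching the parent nest of l through the first d choices.\<close>

definition nl_phi_parent :: "nat \<Rightarrow> nat \<Rightarrow> (nat \<Rightarrow> nat \<Rightarrow> nat) \<Rightarrow> (nat \<Rightarrow> real)
    \<Rightarrow> (nat \<Rightarrow> nat \<Rightarrow> real) \<Rightarrow> nat \<Rightarrow> nat set \<Rightarrow> real" where
  "nl_phi_parent n d anc v lam l T =
     (\<Prod>h<d. nl_v n (Suc d) anc v lam T (Suc h) (anc (Suc h) l)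
        / nl_csum n (Suc d) anc v lam T h (anc h l))"

lemma nl_phi_parent_cong:
  assumes tree: "nl_tree n (Suc d) anc" and m: "m \<in> {1..n}" and l: "l \<in> {1..n}"
    and eq: "anc d m = anc d l"
  shows "nl_phi_parent n d anc v lam m T = nl_phi_parent n d anc v lam l T"
  unfolding nl_phi_parent_def
  by (intro prod.cong refl) (simp add: nl_tree_anc_eq_below[OF tree m l eq])

lemma nl_phi_split:
  assumes tree: "nl_tree n (Suc d) anc" and l: "l \<in> {1..n}" and lT: "l \<in> T"
  shows "nl_phi n (Suc d) anc v lam l T =
    nl_phi_parent n d anc v lam l T * (v l / nl_csum n (Suc d) anc v lam T d (anc d l))"
  using nl_tree_anc_leaf[OF tree l] nl_v_leaf[OF tree l, of v lam T] lT
  unfolding nl_phi_def nl_phi_parent_def by simp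

lemma nl_PN_parent:
  assumes tree: "nl_tree n (Suc d) anc" and vpos: "\<forall>k\<in>{1..n}. v k > 0"
    and l: "l \<in> {1..n}" and lT: "l \<in> T"
  shows "nl_PN n (Suc d) anc v lam T d (anc d l) = nl_phi_parent n d anc v lam l T"
proof -
  let ?L = "nl_leaves n anc d (anc d l) \<inter> T"
  let ?c = "nl_csum n (Suc d) anc v lam T d (anc d l)"
  let ?p = "nl_phi_parent n d anc v lam l T"
  have "nl_PN n (Suc d) anc v lam T d (anc d l) = (\<Sum>m\<in>?L. ?p * (v m / ?c))"
    unfolding nl_PN_def
  proof (rule sum.cong)
    fix m assume "m \<in> ?L"
    then have m: "m \<in> {1..n}" "m \<in> T" and eq: "anc d m = anc d l"
      by (auto simp: nl_leaves_def)
    show "nl_phi n (Suc d) anc v lam m T = ?p * (v m / ?c)"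
      using nl_phi_split[OF tree m] nl_phi_parent_cong[OF tree m(1) l eq] eq by simp
  qed simp
  also have "\<dots> = ?p * ((\<Sum>m\<in>?L. v m) / ?c)"
    by (simp add: sum_distrib_left sum_divide_distrib)
  also have "\<dots> = ?p"
    using nl_csum_bottom[OF tree] nl_csum_bottom_pos[OF tree vpos l lT] by simp
  finally show ?thesis .
qed

lemma nl_BF_eq_ratio_parent:
  assumes tree: "nl_tree n (Suc d) anc" and vpos: "\<forall>k\<in>{1..n}. v k > 0"
    and l: "l \<in> {1..n}" and lS: "l \<in> S"
  shows "nl_BF n (Suc d) anc v lam l S = nl_ratio n (Suc d) anc v lam S d (anc d l)"
proof -
  have cancel: "(a * (w / c)) / (b * (w / e)) = a / b * (e / c)" if "w \<noteq> 0" for a b c e w :: real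
    using that by (simp add: divide_simps)
  have "v l \<noteq> 0" using vpos l by (metis less_irrefl)
  then show ?thesis
    unfolding nl_BF_def nl_ratio_def nl_phi_split[OF tree l lS] nl_phi_split[OF tree l l]
      nl_PN_parent[OF tree vpos l lS] nl_PN_parent[OF tree vpos l l]
    by (rule cancel)
qed

lemma nl_child_of_parent_iff:
  assumes tree: "nl_tree n (Suc d) anc" and j: "j \<in> {1..n}"
  shows "anc (Suc d) j \<in> nl_children n anc d x \<longleftrightarrow> anc d j = x"
  using nl_tree_anc_leaf[OF tree j] j
  unfolding nl_children_bottom[OF tree] nl_leaves_def by simp

theorem propositionD1:
  fixes n d b :: nat and anc :: "nat \<Rightarrow> nat \<Rightarrow> nat" and v :: "nat \<Rightarrow> real"
    and lam :: "nat \<Rightarrow> nat \<Rightarrow> real" and \<sigma> :: "nat \<Rightarrow> nat list"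
    and S :: "nat set" and i j :: nat
  assumes n2: "2 \<le> n"
    and tree: "nl_tree n d anc"
    and vpos: "\<forall>k\<in>{1..n}. v k > 0"
    and lam_range: "\<forall>h<d. \<forall>x\<in>anc h ` {1..n}. 0 < lam h x \<and> lam h x \<le> 1"
    and b2: "2 \<le> b"
    and sigma_len: "\<forall>k\<in>{1..n}. length (\<sigma> k) = nat \<lceil>log (real b) (real n)\<rceil>"
    and sigma_digits: "\<forall>k\<in>{1..n}. \<forall>c\<in>set (\<sigma> k). c < b"
    and sigma_inj: "inj_on \<sigma> {1..n}"
    and gp: "nl_general_position n d anc v lam (nl_design n b (nat \<lceil>log (real b) (real n)\<rceil>) \<sigma>)"
    and S_in: "S \<in> nl_design n b (nat \<lceil>log (real b) (real n)\<rceil>) \<sigma>"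
    and i_in: "i \<in> S" and j_in: "j \<in> S"
  shows "(anc d j \<in> nl_children n anc (d - 1) (anc (d - 1) i) \<longrightarrow>
            nl_BF n d anc v lam i S = nl_BF n d anc v lam j S)
       \<and> (anc d j \<notin> nl_children n anc (d - 1) (anc (d - 1) i) \<and>
            (\<exists>k\<in>{1..n}. anc d k \<in> nl_children n anc (d - 1) (anc (d - 1) i) \<and> k \<notin> S) \<longrightarrow>
            nl_BF n d anc v lam i S \<noteq> nl_BF n d anc v lam j S)"
proof -
  obtain d' where d: "d = Suc d'" using tree unfolding nl_tree_def by (cases d) auto
  note tree' = tree[unfolded d] and child_iff = nl_child_of_parent_iff[OF tree']
  have i: "i \<in> {1..n}" and j: "j \<in> {1..n}"
    using S_in i_in j_in unfolding nl_design_def by auto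
  have BF: "nl_BF n d anc v lam l S = nl_ratio n d anc v lam S d' (anc d' l)"
    if "l \<in> {1..n}" "l \<in> S" for l
    unfolding d by (rule nl_BF_eq_ratio_parent[OF tree' vpos that])
  show ?thesis
  proof (intro conjI impI)
    assume "anc d j \<in> nl_children n anc (d - 1) (anc (d - 1) i)"
    then show "nl_BF n d anc v lam i S = nl_BF n d anc v lam j S"
      using child_iff[OF j] BF[OF i i_in] BF[OF j j_in] d by simp
  next
    assume "anc d j \<notin> nl_children n anc (d - 1) (anc (d - 1) i) \<and>
            (\<exists>k\<in>{1..n}. anc d k \<in> nl_children n anc (d - 1) (anc (d - 1) i) \<and> k \<notin> S)"
    then obtain k where "anc d' j \<noteq> anc d' i" "k \<in> {1..n}" "anc d' k = anc d' i" "k \<notin> S"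
      using child_iff d j by auto
    then have "nl_ratio n d anc v lam S d' (anc d' i) \<noteq> nl_ratio n d anc v lam S d' (anc d' j)"
      using i j i_in j_in d
      by (intro gp[unfolded nl_general_position_def, rule_format, OF S_in])
        (auto simp: nl_leaves_def)
    then show "nl_BF n d anc v lam i S \<noteq> nl_BF n d anc v lam j S"
      using BF[OF i i_in] BF[OF j j_in] by simp
  qed
qed

end
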